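(* Let $p\in\mathbb{Z}^d$ with $\gcd(p_1,\dots,p_d)=1$, let $n=\max_k|p_k|$, $m=\#\{k:|p_k|=n\}$, and $Q(\lambda)=\sum_{k=1}^d(\lambda^{p_k}+\lambda^{-p_k}-2)$. Then $Q(\lambda)=m\lambda^{-n}\prod_{k=1}^n(\lambda-\lambda_k)(\lambda-\lambda_k^{-1})$ for some $\lambda_1,\dots,\lambda_n\in\mathbb{C}$ satisfying $1=\lambda_1<|\lambda_2|\le\cdots\le|\lambda_n|$ and $\lambda_2,\dots,\lambda_n\notin[1,\infty)$. Moreover, for any such roots, $$H(p)^2=|p|^2\,m\prod_{k=2}^n(-\lambda_k).$$
   Context: Discrete Laplacian on $\mathbb{Z}^d$: $\Delta u(x)=\sum_{i=1}^d(u(x+e_i)+u(x-e_i)-2u(x))$. For $p\ne0$, $H(p)=\Delta u_p(0)$ where $u_p$ is the unique solution of $\Delta u=0$ on $\{p\cdot x>0\}$, $u=0$ on $\{p\cdot x\le0\}$, $\sup_{p\cdot x>0}|u(x)-p\cdot x|<\infty$. *)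

theory Defs
  imports "HOL-Analysis.Analysis"
begin

text \<open>Lattice points of Z^d are modelled as int^'d, 'd an arbitrary finite index type (d = CARD('d)).\<close>

definition ldot :: "int ^ 'd \<Rightarrow> int ^ 'd \<Rightarrow> int" where
  "ldot p x = (\<Sum>i\<in>UNIV. p $ i * x $ i)"

definition dlap :: "(int ^ 'd \<Rightarrow> real) \<Rightarrow> int ^ 'd \<Rightarrow> real" where
  "dlap u x = (\<Sum>i\<in>UNIV. u (x + axis i 1) + u (x - axis i 1) - 2 * u x)"

definition usol :: "int ^ 'd \<Rightarrow> (int ^ 'd \<Rightarrow> real)" where
  "usol p = (THE u. (\<forall>x. ldot p x > 0 \<longrightarrow> dlap u x = 0)
                 \<and> (\<forall>x. ldot p x \<le> 0 \<longrightarrow> u x = 0)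
                 \<and> (\<exists>C. \<forall>x. ldot p x > 0 \<longrightarrow> \<bar>u x - real_of_int (ldot p x)\<bar> \<le> C))"

definition Hfun :: "int ^ 'd \<Rightarrow> real" where
  "Hfun p = dlap (usol p) 0"

definition Qpoly :: "int ^ 'd \<Rightarrow> complex \<Rightarrow> complex" where
  "Qpoly p z = (\<Sum>k\<in>UNIV. z powi (p $ k) + z powi (- (p $ k)) - 2)"

end

theory Submission
  imports Defs "HOL-Computational_Algebra.Fundamental_Theorem_Algebra"
begin

text \<open>
  A maximum principle, applied to suprema over the level sets of x \<mapsto> p \<cdot> x, shows that the
  half-space problem has at most one solution, so u_p(x) = f(p \<cdot> x) as soon as f : \<int> \<rightarrow> \<real>
  vanishes on t \<le> 0, satisfies \<Sum>_k f(t + p_k) + f(t - p_k) - 2 f(t) = 0 for t > 0 and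
  f(t) - t is bounded; then H(p) is the same expression at t = 0.

  Put P(z) = z^n Q(z) = (z - 1)^2 R(z). P is self-reciprocal, and since gcd(p) = 1 its only root
  on the unit circle is 1, a double root; so the other roots pair off as \<lambda>, 1/\<lambda> with |\<lambda>| > 1,
  and none is real \<ge> 1 because R > 0 on (0, \<infinity>).

  The generating function F = c X / ((1 - X)^2 \<Prod>_k (1 - X/\<lambda>_k)) with c = \<Prod>_k (1 - 1/\<lambda>_k)
  has coefficients f(t) = t + O(1), and P F = m \<Prod>_k (1 - \<lambda>_k) X \<Prod>_k (X - 1/\<lambda>_k) is a
  polynomial of degree n. Reading off coefficients gives the recurrence for f and
  H(p) = m \<Prod>_k (1 - \<lambda>_k). Finally R(1) = |p|^2 = m \<Prod>_k (1 - \<lambda>_k)(1 - 1/\<lambda>_k), and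
  (1 - \<lambda>)^2 = (1 - \<lambda>)(1 - 1/\<lambda>)(-\<lambda>).
\<close>

section \<open>A maximum principle on the half-line and the half-space\<close>

definition dlap1 :: "int ^ 'd \<Rightarrow> (int \<Rightarrow> 'a::comm_ring_1) \<Rightarrow> int \<Rightarrow> 'a" where
  "dlap1 p f t = (\<Sum>k\<in>UNIV. f (t + p $ k) + f (t - p $ k) - 2 * f t)"

lemma dlap1_eq: "dlap1 p f t = (\<Sum>k\<in>UNIV. f (t + p $ k) + f (t - p $ k)) - 2 * of_nat CARD('d) * f t"
  for p :: "int ^ 'd"
  unfolding dlap1_def by (simp add: sum_subtractf sum_distrib_right[symmetric] mult.commute)

lemma dlap1_diff: "dlap1 p (\<lambda>t. f t - g t) t = dlap1 p f t - dlap1 p g t"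
  unfolding dlap1_def by (simp add: sum_subtractf[symmetric] algebra_simps)

lemma dlap1_uminus: "dlap1 p (\<lambda>t. - f t) t = - dlap1 p f t"
  unfolding dlap1_def by (simp add: sum_negf[symmetric] algebra_simps)

lemma dlap1_affine: "dlap1 p (\<lambda>t. c * (of_int t + a)) t = 0"
  unfolding dlap1_def by (simp add: algebra_simps)

lemma Re_dlap1: "Re (dlap1 p f t) = dlap1 p (\<lambda>t. Re (f t)) t"
  and Im_dlap1: "Im (dlap1 p f t) = dlap1 p (\<lambda>t. Im (f t)) t"
  unfolding dlap1_def by (simp_all add: Re_sum Im_sum)

lemma subharmonic_max_spreads:
  fixes z :: "int \<Rightarrow> real"
  assumes "dlap1 p z s \<ge> 0" and "\<And>k. z (s + p $ k) \<le> z s" and "\<And>k. z (s - p $ k) \<le> z s"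
  shows "z (s - \<bar>p $ k\<bar>) = z s"
proof -
  define d where "d k = (z s - z (s + p $ k)) + (z s - z (s - p $ k))" for k
  have d_nonneg: "0 \<le> d k" for k
    unfolding d_def using assms(2,3)[of k] by simp
  have "sum d UNIV = - dlap1 p z s"
    unfolding d_def dlap1_def by (simp add: sum_negf[symmetric] algebra_simps)
  moreover have "0 \<le> sum d UNIV" using d_nonneg by (rule sum_nonneg)
  ultimately have "sum d UNIV = 0" using assms(1) by linarith
  hence "d k = 0" using d_nonneg by (simp add: sum_nonneg_eq_0_iff)
  thus ?thesis unfolding d_def using assms(2,3)[of k] by (cases "p $ k \<ge> 0") auto
qed

lemma obtain_leftmost_maximizer:
  fixes z :: "'a::linorder \<Rightarrow> 'b::linorder"
  assumes "finite T" and "T \<noteq> {}"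
  obtains s where "s \<in> T" and "\<And>t. t \<in> T \<Longrightarrow> z t \<le> z s"
    and "\<And>t. t \<in> T \<Longrightarrow> z t = z s \<Longrightarrow> s \<le> t"
proof -
  define A where "A = {t \<in> T. z t = Max (z ` T)}"
  have "Max (z ` T) \<in> z ` T" using assms by simp
  hence "finite A" "A \<noteq> {}" unfolding A_def using assms(1) by auto
  hence "Min A \<in> A" by simp
  thus thesis using assms(1) \<open>finite A\<close> by (intro that[of "Min A"]) (auto simp: A_def)
qed

lemma window_maximum_principle:
  fixes p :: "int ^ 'd" and z :: "int \<Rightarrow> real"
  assumes "p \<noteq> 0" and r: "\<And>k. \<bar>p $ k\<bar> \<le> r"
    and left: "\<And>t. - r \<le> t \<Longrightarrow> t \<le> 0 \<Longrightarrow> z t \<le> 0"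
    and right: "\<And>t. N \<le> t \<Longrightarrow> t \<le> N + r \<Longrightarrow> z t \<le> 0"
    and subharmonic: "\<And>t. 0 < t \<Longrightarrow> t < N \<Longrightarrow> dlap1 p z t \<ge> 0"
    and "0 < s" and "s < N"
  shows "z s \<le> 0"
proof (rule ccontr)
  assume "\<not> z s \<le> 0"
  obtain i where i: "p $ i \<noteq> 0" using assms(1) by (auto simp: vec_eq_iff)
  define T where "T = {-r..N + r}"
  obtain s1 where s1: "s1 \<in> T" and s1_max: "\<And>t. t \<in> T \<Longrightarrow> z t \<le> z s1"
    and s1_leftmost: "\<And>t. t \<in> T \<Longrightarrow> z t = z s1 \<Longrightarrow> s1 \<le> t"
    by (rule obtain_leftmost_maximizer[of T z]) (use assms(6,7) r[of i] in \<open>auto simp: T_def\<close>)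
  have "z s1 > 0"
    using s1_max[of s] \<open>\<not> z s \<le> 0\<close> assms(6,7) r[of i] unfolding T_def by fastforce
  hence "0 < s1" "s1 < N" using s1 left[of s1] right[of s1] unfolding T_def by force+
  hence neighbours: "s1 + p $ k \<in> T" "s1 - p $ k \<in> T" for k
    using r[of k] unfolding T_def by auto
  have "z (s1 - \<bar>p $ i\<bar>) = z s1"
    by (rule subharmonic_max_spreads) (use subharmonic \<open>0 < s1\<close> \<open>s1 < N\<close> s1_max neighbours in auto)
  moreover have "s1 - \<bar>p $ i\<bar> \<in> T" using neighbours[of i] by (cases "p $ i \<ge> 0") auto
  ultimately show False using s1_leftmost i by fastforce
qed

lemma halfline_maximum_principle:
  fixes p :: "int ^ 'd" and M :: "int \<Rightarrow> real"
  assumes "p \<noteq> 0" and bounded: "\<And>t. M t \<le> B" and nonpos: "\<And>t. t \<le> 0 \<Longrightarrow> M t \<le> 0"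
    and subharmonic: "\<And>t. t > 0 \<Longrightarrow> dlap1 p M t \<ge> 0"
  shows "M s \<le> 0"
proof (rule ccontr)
  assume "\<not> M s \<le> 0"
  hence Ms: "M s > 0" by simp
  have s_pos: "s > 0" using Ms nonpos[of s] by force
  define r where "r = Max (range (\<lambda>k. \<bar>p $ k\<bar>))"
  have r: "\<bar>p $ k\<bar> \<le> r" for k unfolding r_def by (rule Max_ge) auto
  obtain i where "p $ i \<noteq> 0" using assms(1) by (auto simp: vec_eq_iff)
  hence r_pos: "r > 0" using r[of i] by linarith
  obtain N :: int where N: "real_of_int N > max (real_of_int s) (B * (s + r) / M s)"
    by (meson ex_less_of_int)
  define c where "c = B / (N + r)"
  have c_pos: "c > 0" and c_N: "c * (N + r) = B"
    unfolding c_def using bounded[of s] Ms N s_pos r_pos by auto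
  \<comment> \<open>Tilting by the harmonic function c (t + r) leaves M subharmonic but makes it nonpositive
    at both ends of the window [-r, N + r], while it stays positive at s.\<close>
  define z where "z t = M t - c * (of_int t + of_int r)" for t
  have "z s \<le> 0"
  proof (rule window_maximum_principle[OF assms(1) r])
    show "z t \<le> 0" if "- r \<le> t" "t \<le> 0" for t
    proof -
      have "0 \<le> c * (of_int t + of_int r)" using that c_pos by simp
      thus ?thesis using nonpos[OF that(2)] unfolding z_def by simp
    qed
    show "z t \<le> 0" if "N \<le> t" for t
    proof -
      have "c * (N + r) \<le> c * (of_int t + of_int r)" using that c_pos by simp
      thus ?thesis using bounded[of t] c_N unfolding z_def by simp
    qed
    show "dlap1 p z t \<ge> 0" if "0 < t" for t
      using subharmonic[OF that] unfolding z_def dlap1_diff dlap1_affine by simp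
  qed (use N s_pos in auto)
  moreover have "z s > 0"
  proof -
    have "B * (s + r) < M s * N" using N Ms by (simp add: divide_less_eq mult.commute)
    also have "\<dots> \<le> M s * (N + r)" using Ms r_pos by simp
    finally show ?thesis unfolding z_def c_def using N s_pos r_pos by (simp add: field_simps)
  qed
  ultimately show False by simp
qed

lemma halfline_bounded_harmonic_eq_0:
  fixes p :: "int ^ 'd" and f :: "int \<Rightarrow> real"
  assumes "p \<noteq> 0" and "\<And>t. \<bar>f t\<bar> \<le> B" and "\<And>t. t \<le> 0 \<Longrightarrow> f t = 0"
    and "\<And>t. t > 0 \<Longrightarrow> dlap1 p f t = 0"
  shows "f s = 0"
proof -
  have "f s \<le> 0"
    by (rule halfline_maximum_principle[OF assms(1), where B = B]) (use assms(2-4) in \<open>auto simp: abs_le_iff\<close>)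
  moreover have "- f s \<le> 0"
    by (rule halfline_maximum_principle[OF assms(1), where B = B])
       (use assms(2-4) in \<open>auto simp: abs_le_iff dlap1_uminus\<close>)
  ultimately show ?thesis by simp
qed

lemma ldot_add: "ldot p (x + y) = ldot p x + ldot p y"
  unfolding ldot_def by (simp add: algebra_simps sum.distrib)

lemma ldot_diff: "ldot p (x - y) = ldot p x - ldot p y"
  unfolding ldot_def by (simp add: algebra_simps sum_subtractf)

lemma ldot_0 [simp]: "ldot p 0 = 0"
  unfolding ldot_def by simp

lemma ldot_axis [simp]: "ldot p (axis i 1) = p $ i"
  unfolding ldot_def axis_def by (simp add: if_distrib cong: if_cong)

lemma dlap_eq: "dlap u x = (\<Sum>i\<in>UNIV. u (x + axis i 1) + u (x - axis i 1)) - 2 * real CARD('d) * u x"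
  for x :: "int ^ 'd"
  unfolding dlap_def by (simp add: sum_subtractf sum_distrib_right[symmetric] mult.commute)

lemma dlap_diff: "dlap (\<lambda>x. u x - v x) x = dlap u x - dlap v x"
  unfolding dlap_def by (simp add: sum_subtractf[symmetric] algebra_simps)

lemma dlap_uminus: "dlap (\<lambda>x. - u x) x = - dlap u x"
  unfolding dlap_def by (simp add: sum_negf[symmetric] algebra_simps)

lemma dlap_comp_ldot: "dlap (\<lambda>x. f (ldot p x)) x = dlap1 p f (ldot p x)"
  unfolding dlap_def dlap1_def by (simp add: ldot_add ldot_diff)

text \<open>The level-set suprema of a subharmonic function on the half-space are subharmonic on the half-line.\<close>

lemma halfspace_maximum_principle:
  fixes p :: "int ^ 'd" and w :: "int ^ 'd \<Rightarrow> real"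
  assumes "p \<noteq> 0" and bounded: "\<And>x. w x \<le> B" and zero: "\<And>x. ldot p x \<le> 0 \<Longrightarrow> w x = 0"
    and subharmonic: "\<And>x. ldot p x > 0 \<Longrightarrow> dlap w x \<ge> 0"
  shows "w x \<le> 0"
proof -
  define M where "M s = Sup (insert 0 {w x | x. ldot p x = s})" for s
  have B_nonneg: "0 \<le> B" using bounded[of 0] zero[of 0] by simp
  have bdd: "bdd_above (insert 0 {w x | x. ldot p x = s})" for s
    using bounded B_nonneg by (intro bdd_aboveI[of _ B]) auto
  have w_le_M: "w x \<le> M (ldot p x)" for x
    unfolding M_def by (rule cSup_upper[OF _ bdd]) auto
  have M_nonneg: "0 \<le> M s" for s
    unfolding M_def by (rule cSup_upper[OF _ bdd]) auto
  have "M s \<le> B" for s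
    unfolding M_def using bounded B_nonneg by (intro cSup_least) auto
  moreover have "M s \<le> 0" if "s \<le> 0" for s
    unfolding M_def using zero that by (intro cSup_least) auto
  moreover have "dlap1 p M s \<ge> 0" if s: "s > 0" for s
  proof -
    define R where "R = (\<Sum>k\<in>UNIV. M (s + p $ k) + M (s - p $ k))"
    have "w x \<le> R / (2 * real CARD('d))" if "ldot p x = s" for x
    proof -
      have "2 * real CARD('d) * w x \<le> (\<Sum>i\<in>UNIV. w (x + axis i 1) + w (x - axis i 1))"
        using subharmonic[of x] that s unfolding dlap_eq by simp
      also have "\<dots> \<le> R" unfolding R_def
        using w_le_M[of "x + axis _ 1"] w_le_M[of "x - axis _ 1"] that
        by (intro sum_mono add_mono) (simp_all add: ldot_add ldot_diff)
      finally show ?thesis by (simp add: le_divide_eq mult.commute)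
    qed
    moreover have "0 \<le> R" unfolding R_def using M_nonneg by (intro sum_nonneg add_nonneg_nonneg)
    ultimately have "M s \<le> R / (2 * real CARD('d))"
      unfolding M_def by (intro cSup_least) auto
    thus ?thesis unfolding dlap1_eq R_def by (simp add: le_divide_eq mult.commute)
  qed
  ultimately have "M (ldot p x) \<le> 0"
    by (rule halfline_maximum_principle[OF assms(1), where B = B])
  thus ?thesis using w_le_M[of x] by simp
qed

lemma halfspace_bounded_harmonic_eq_0:
  fixes p :: "int ^ 'd" and w :: "int ^ 'd \<Rightarrow> real"
  assumes "p \<noteq> 0" and "\<And>x. \<bar>w x\<bar> \<le> B" and "\<And>x. ldot p x \<le> 0 \<Longrightarrow> w x = 0"
    and "\<And>x. ldot p x > 0 \<Longrightarrow> dlap w x = 0"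
  shows "w x = 0"
proof -
  have "w x \<le> 0"
    by (rule halfspace_maximum_principle[OF assms(1), where B = B]) (use assms(2-4) in \<open>auto simp: abs_le_iff\<close>)
  moreover have "- w x \<le> 0"
    by (rule halfspace_maximum_principle[OF assms(1), where B = B])
       (use assms(2-4) in \<open>auto simp: abs_le_iff dlap_uminus\<close>)
  ultimately show ?thesis by simp
qed

definition halfspace_solution :: "int ^ 'd \<Rightarrow> (int ^ 'd \<Rightarrow> real) \<Rightarrow> bool" where
  "halfspace_solution p u \<longleftrightarrow> (\<forall>x. ldot p x > 0 \<longrightarrow> dlap u x = 0)
     \<and> (\<forall>x. ldot p x \<le> 0 \<longrightarrow> u x = 0)
     \<and> (\<exists>C. \<forall>x. ldot p x > 0 \<longrightarrow> \<bar>u x - real_of_int (ldot p x)\<bar> \<le> C)"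

lemma usol_eqI:
  assumes "p \<noteq> 0" and u: "halfspace_solution p u"
  shows "usol p = u"
proof -
  have "v = u" if v: "halfspace_solution p v" for v
  proof
    fix x
    obtain Cu Cv where
      Cu: "\<And>x. ldot p x > 0 \<Longrightarrow> \<bar>u x - real_of_int (ldot p x)\<bar> \<le> Cu" and
      Cv: "\<And>x. ldot p x > 0 \<Longrightarrow> \<bar>v x - real_of_int (ldot p x)\<bar> \<le> Cv"
      using u v unfolding halfspace_solution_def by blast
    have "\<bar>v x - u x\<bar> \<le> \<bar>Cu\<bar> + \<bar>Cv\<bar>" for x
    proof (cases "ldot p x > 0")
      case True thus ?thesis using Cu[OF True] Cv[OF True] by linarith
    next
      case False thus ?thesis using u v unfolding halfspace_solution_def by simp
    qed
    hence "v x - u x = 0"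
      by (rule halfspace_bounded_harmonic_eq_0[OF assms(1)])
         (use u v in \<open>auto simp: halfspace_solution_def dlap_diff\<close>)
    thus "v x = u x" by simp
  qed
  hence "(THE u. halfspace_solution p u) = u" using u by (intro the_equality)
  thus ?thesis unfolding usol_def halfspace_solution_def .
qed

definition halfline_solution :: "int ^ 'd \<Rightarrow> (int \<Rightarrow> real) \<Rightarrow> bool" where
  "halfline_solution p f \<longleftrightarrow> (\<forall>t > 0. dlap1 p f t = 0) \<and> (\<forall>t \<le> 0. f t = 0)
     \<and> (\<exists>C. \<forall>t > 0. \<bar>f t - real_of_int t\<bar> \<le> C)"

lemma Hfun_eq_dlap1:
  assumes "p \<noteq> 0" and "halfline_solution p f"
  shows "Hfun p = dlap1 p f 0"
proof -
  have "halfspace_solution p (\<lambda>x. f (ldot p x))"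
    using assms(2) unfolding halfline_solution_def halfspace_solution_def dlap_comp_ldot by blast
  hence "usol p = (\<lambda>x. f (ldot p x))" by (rule usol_eqI[OF assms(1)])
  thus ?thesis unfolding Hfun_def by (simp add: dlap_comp_ldot)
qed

section \<open>The roots of Q\<close>

text \<open>For n \<ge> max |p_k|, Q(z) = z^-n P(z) with the polynomial P below, and P = (X - 1)^2 R.\<close>

definition Ppoly :: "int ^ 'd \<Rightarrow> nat \<Rightarrow> complex poly" where
  "Ppoly p n = (\<Sum>k\<in>UNIV. monom 1 (n + nat \<bar>p $ k\<bar>) + monom 1 (n - nat \<bar>p $ k\<bar>) - monom 2 n)"

definition Rpoly :: "int ^ 'd \<Rightarrow> nat \<Rightarrow> complex poly" where
  "Rpoly p n = (\<Sum>k\<in>UNIV. monom 1 (n - nat \<bar>p $ k\<bar>) * (\<Sum>i<nat \<bar>p $ k\<bar>. monom 1 i)\<^sup>2)"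

lemma Qpoly_eq_Ppoly:
  fixes p :: "int ^ 'd"
  assumes "\<forall>k. \<bar>p $ k\<bar> \<le> int n" and z: "z \<noteq> 0"
  shows "Qpoly p z = z powi (- int n) * poly (Ppoly p n) z"
proof -
  have "z powi b + z powi (- b) - 2
      = z powi (- int n) * (z ^ (n + nat \<bar>b\<bar>) + z ^ (n - nat \<bar>b\<bar>) - 2 * z ^ n)"
    if "\<bar>b\<bar> \<le> int n" for b
  proof -
    have shift: "z powi (- int n) * z ^ k = z powi (int k - int n)" for k
      using z power_int_add[of z "int k" "- int n"] by (simp add: power_int_of_nat mult.commute)
    have "z powi b + z powi (- b) = z powi \<bar>b\<bar> + z powi (- \<bar>b\<bar>)"
      by (cases "b \<ge> 0") auto
    moreover have "int (n + nat \<bar>b\<bar>) - int n = \<bar>b\<bar>" "int (n - nat \<bar>b\<bar>) - int n = - \<bar>b\<bar>"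
      using that by auto
    moreover have "z powi (- int n) * (z ^ (n + nat \<bar>b\<bar>) + z ^ (n - nat \<bar>b\<bar>) - 2 * z ^ n)
        = z powi (- int n) * z ^ (n + nat \<bar>b\<bar>) + z powi (- int n) * z ^ (n - nat \<bar>b\<bar>)
          - 2 * (z powi (- int n) * z ^ n)"
      by (simp add: algebra_simps)
    ultimately show ?thesis unfolding shift by simp
  qed
  hence "Qpoly p z = (\<Sum>k\<in>UNIV. z powi (- int n)
      * (z ^ (n + nat \<bar>p $ k\<bar>) + z ^ (n - nat \<bar>p $ k\<bar>) - 2 * z ^ n))"
    unfolding Qpoly_def using assms(1) by (intro sum.cong) auto
  thus ?thesis unfolding Ppoly_def by (simp add: poly_sum poly_monom sum_distrib_left)
qed

lemma Ppoly_eq_Rpoly: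
  assumes "\<forall>k. \<bar>p $ k\<bar> \<le> int n"
  shows "Ppoly p n = [:-1, 1:]\<^sup>2 * Rpoly p n"
proof (rule poly_ext)
  fix z :: complex
  have "z ^ (n + a) + z ^ (n - a) - 2 * z ^ n = (z - 1)\<^sup>2 * (z ^ (n - a) * (\<Sum>i<a. z ^ i)\<^sup>2)"
    if "a \<le> n" for a
  proof -
    have "(z - 1)\<^sup>2 * (z ^ (n - a) * (\<Sum>i<a. z ^ i)\<^sup>2) = z ^ (n - a) * ((z - 1) * (\<Sum>i<a. z ^ i))\<^sup>2"
      by (simp add: power2_eq_square algebra_simps)
    also have "\<dots> = z ^ (n - a) * (z ^ a - 1)\<^sup>2"
      using power_diff_1_eq[of z a] by simp
    also have "\<dots> = z ^ (n - a + a + a) + z ^ (n - a) - 2 * z ^ (n - a + a)"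
      by (simp add: power2_eq_square algebra_simps power_add)
    finally show ?thesis using that by simp
  qed
  hence "poly (Ppoly p n) z
      = (\<Sum>k\<in>UNIV. (z - 1)\<^sup>2 * (z ^ (n - nat \<bar>p $ k\<bar>) * (\<Sum>i<nat \<bar>p $ k\<bar>. z ^ i)\<^sup>2))"
    unfolding Ppoly_def using assms by (auto simp: poly_sum poly_monom nat_le_iff intro!: sum.cong)
  thus "poly (Ppoly p n) z = poly ([:-1, 1:]\<^sup>2 * Rpoly p n) z"
    unfolding Rpoly_def by (simp add: poly_sum poly_monom sum_distrib_left)
qed

lemma poly_Rpoly_1: "poly (Rpoly p n) 1 = of_int (\<Sum>k\<in>UNIV. (p $ k)\<^sup>2)"
  unfolding Rpoly_def of_int_sum
  by (auto simp: poly_sum poly_monom of_nat_nat simp flip: of_int_power intro!: sum.cong)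

lemma poly_Rpoly_of_real_pos:
  fixes p :: "int ^ 'd"
  assumes "p \<noteq> 0" and "r > 0"
  shows "poly (Rpoly p n) (of_real r) \<noteq> 0"
proof -
  obtain i0 where i0: "p $ i0 \<noteq> 0" using assms(1) by (auto simp: vec_eq_iff)
  define f where "f k = r ^ (n - nat \<bar>p $ k\<bar>) * (\<Sum>i<nat \<bar>p $ k\<bar>. r ^ i)\<^sup>2" for k
  have "poly (Rpoly p n) (of_real r) = of_real (\<Sum>k\<in>UNIV. f k)"
    unfolding Rpoly_def f_def by (simp add: poly_sum poly_monom)
  moreover have "(\<Sum>k\<in>UNIV. f k) > 0"
  proof (rule sum_pos2)
    show "0 \<le> f k" for k unfolding f_def using assms(2) by (intro mult_nonneg_nonneg sum_nonneg) auto
    have "(\<Sum>i<nat \<bar>p $ i0\<bar>. r ^ i) > 0"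
      using i0 assms(2) by (intro sum_pos2[of _ 0]) auto
    thus "0 < f i0" unfolding f_def using assms(2) by simp
  qed auto
  ultimately show ?thesis by (metis of_real_eq_0_iff less_irrefl)
qed

lemma Ppoly_degree_lead_reflect:
  fixes p :: "int ^ 'd"
  assumes bound: "\<forall>k. \<bar>p $ k\<bar> \<le> int n" and "n \<ge> 1"
    and m: "m = card {k. \<bar>p $ k\<bar> = int n}" "m > 0"
  shows "degree (Ppoly p n) = 2 * n" and "lead_coeff (Ppoly p n) = of_nat m"
    and "reflect_poly (Ppoly p n) = Ppoly p n"
proof -
  define a where "a k = nat \<bar>p $ k\<bar>" for k
  have a_le: "a k \<le> n" for k using bound unfolding a_def by (simp add: nat_le_iff)
  have coeff: "coeff (Ppoly p n) i = (\<Sum>k\<in>UNIV. (if n + a k = i then 1 else 0)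
      + (if n - a k = i then 1 else 0) - (if n = i then 2 else 0))" for i
    unfolding Ppoly_def a_def by (simp add: coeff_sum coeff_monom)
  have above: "coeff (Ppoly p n) i = 0" if "i > 2 * n" for i
    unfolding coeff using a_le that by (intro sum.neutral) (auto, (metis less_le_not_le)+)
  have "coeff (Ppoly p n) (2 * n) = (\<Sum>k\<in>UNIV. if a k = n then 1 else 0)"
    unfolding coeff using \<open>n \<ge> 1\<close> by (intro sum.cong) auto
  also have "\<dots> = of_nat (card {k. a k = n})" by (simp add: sum.If_cases)
  also have "{k. a k = n} = {k. \<bar>p $ k\<bar> = int n}" unfolding a_def by auto
  finally have top: "coeff (Ppoly p n) (2 * n) = of_nat m" unfolding m(1) .
  have palindromic: "coeff (Ppoly p n) (2 * n - i) = coeff (Ppoly p n) i" if "i \<le> 2 * n" for i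
  proof -
    have "(n + a k = 2 * n - i) = (n - a k = i)" "(n - a k = 2 * n - i) = (n + a k = i)"
      "(n = 2 * n - i) = (n = i)" for k
      using a_le[of k] that by arith+
    thus ?thesis unfolding coeff by (intro sum.cong) auto
  qed
  show deg: "degree (Ppoly p n) = 2 * n"
    using above top m(2) by (intro antisym degree_le le_degree) auto
  show "lead_coeff (Ppoly p n) = of_nat m" using deg top by simp
  show "reflect_poly (Ppoly p n) = Ppoly p n"
    by (rule poly_eqI) (use above palindromic in \<open>auto simp: coeff_reflect_poly deg\<close>)
qed

lemma powi_Gcd_eq_1:
  fixes z :: "'a::field"
  assumes "z \<noteq> 0" and "finite A" and "\<forall>a\<in>A. z powi a = 1"
  shows "z powi (Gcd A) = 1"
  using assms(2,3)
proof (induction A rule: finite_induct)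
  case (insert a A)
  obtain u v where uv: "u * a + v * Gcd A = gcd a (Gcd A)"
    using bezout_coefficients_fst_snd by blast
  have "z powi (u * a + v * Gcd A) = z powi (a * u) * z powi (Gcd A * v)"
    using assms(1) by (simp add: power_int_add mult.commute)
  also have "\<dots> = 1" using insert by (simp add: power_int_mult)
  finally show ?case unfolding uv by simp
qed simp

text \<open>On the unit circle every term z^p_k + z^-p_k - 2 = 2 Re z^p_k - 2 of Q is \<le> 0.\<close>

lemma Qpoly_root_on_unit_circle:
  fixes p :: "int ^ 'd"
  assumes "Gcd (range (\<lambda>k. p $ k)) = 1" and z: "cmod z = 1" and "Qpoly p z = 0"
  shows "z = 1"
proof -
  define w where "w k = z powi (p $ k)" for k
  have norm_w: "cmod (w k) = 1" for k unfolding w_def by (simp add: norm_power_int z)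
  have Re_w: "Re (w k) \<le> 1" for k using complex_Re_le_cmod[of "w k"] norm_w[of k] by simp
  have Re_term: "Re (w k + z powi (- p $ k) - 2) = - (2 - 2 * Re (w k))" for k
  proof -
    have "(Re (w k))\<^sup>2 + (Im (w k))\<^sup>2 = 1" using norm_w[of k] cmod_power2[of "w k"] by simp
    moreover have "z powi (- p $ k) = inverse (w k)" unfolding w_def by (simp add: power_int_minus)
    ultimately show ?thesis by simp
  qed
  have "0 = Re (Qpoly p z)" using assms(3) by simp
  also have "\<dots> = - (\<Sum>k\<in>UNIV. 2 - 2 * Re (w k))"
    unfolding Qpoly_def Re_sum w_def[symmetric] Re_term sum_negf ..
  finally have "(\<Sum>k\<in>UNIV. 2 - 2 * Re (w k)) = 0" by simp
  hence "2 - 2 * Re (w k) = 0" for k using Re_w by (subst (asm) sum_nonneg_eq_0_iff) auto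
  hence "w k = 1" for k
    using norm_w[of k] cmod_power2[of "w k"] by (simp add: complex_eq_iff)
  hence "z powi (Gcd (range (\<lambda>k. p $ k))) = 1"
    using z unfolding w_def by (intro powi_Gcd_eq_1) auto
  thus ?thesis using assms(1) by simp
qed

definition recip_pair :: "complex \<Rightarrow> complex poly" where
  "recip_pair x = [:-x, 1:] * [:-inverse x, 1:]"

lemma poly_recip_pair: "poly (recip_pair x) z = (z - x) * (z - inverse x)"
  unfolding recip_pair_def by (simp add: algebra_simps)

lemma proots_prod_mset_linear: "proots (\<Prod>x\<in>#A. [:-x, 1:]) = (A :: 'a::idom multiset)"
proof (induction A)
  case (add x A)
  have "(\<Prod>x\<in>#A. [:-x, 1:]) \<noteq> 0" by (auto simp: prod_mset_zero_iff)
  thus ?case using add by (simp add: proots_mult del: mult_pCons_left)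
qed simp

lemma reflect_poly_prod_mset_linear:
  fixes A :: "'a::field multiset"
  assumes "0 \<notin># A"
  shows "reflect_poly (\<Prod>x\<in>#A. [:-x, 1:]) = smult (\<Prod>x\<in>#A. - x) (\<Prod>x\<in>#A. [:-inverse x, 1:])"
  using assms
proof (induction A)
  case (add x A)
  have "reflect_poly [:-x, 1:] = smult (- x) [:-inverse x, 1:]"
    using add.prems by (simp add: reflect_poly_pCons)
  moreover have "reflect_poly (\<Prod>x\<in>#A. [:-x, 1:]) = smult (\<Prod>x\<in>#A. - x) (\<Prod>x\<in>#A. [:-inverse x, 1:])"
    using add by simp
  ultimately show ?case
    by (simp only: image_mset_add_mset prod_mset.add_mset reflect_poly_mult
        mult_smult_left mult_smult_right smult_smult mult.commute)
qed simp

lemma proots_reflect_poly: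
  fixes R :: "complex poly"
  assumes "poly R 0 \<noteq> 0"
  shows "proots (reflect_poly R) = image_mset inverse (proots R)"
proof -
  have R0: "R \<noteq> 0" using assms by auto
  have nz: "0 \<notin># proots R" using assms R0 by simp
  have c: "lead_coeff R * (\<Prod>x\<in>#proots R. - x) \<noteq> 0"
    using R0 nz by (auto simp: prod_mset_zero_iff)
  have "reflect_poly R = reflect_poly (smult (lead_coeff R) (\<Prod>x\<in>#proots R. [:-x, 1:]))"
    by (simp add: complex_poly_decompose_multiset)
  also have "\<dots> = smult (lead_coeff R * (\<Prod>x\<in>#proots R. - x))
      (\<Prod>y\<in>#image_mset inverse (proots R). [:-y, 1:])"
    using nz by (simp add: reflect_poly_smult reflect_poly_prod_mset_linear image_mset.compositionality o_def)
  finally show ?thesis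
    by (simp only: proots_smult[OF c] proots_prod_mset_linear)
qed

lemma self_reciprocal_poly_factorization:
  fixes R :: "complex poly"
  assumes reflect: "reflect_poly R = R" and "R \<noteq> 0"
    and no_unit_roots: "\<And>z. cmod z = 1 \<Longrightarrow> poly R z \<noteq> 0"
  obtains B where "degree R = 2 * size B" and "\<forall>x\<in>#B. 1 < cmod x \<and> poly R x = 0"
    and "R = smult (lead_coeff R) (\<Prod>x\<in>#B. recip_pair x)"
proof -
  define P where "P = proots R"
  define B where "B = filter_mset (\<lambda>x. 1 < cmod x) P"
  have "poly R 0 \<noteq> 0"
    using assms(2) reflect poly_reflect_poly_0[of R] by simp
  hence P0: "x \<noteq> 0" "cmod x \<noteq> 1" if "x \<in># P" for x
    using that no_unit_roots assms(2) unfolding P_def by auto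
  have P_inverse: "image_mset inverse P = P"
    using proots_reflect_poly[OF \<open>poly R 0 \<noteq> 0\<close>] reflect unfolding P_def by simp
  have "filter_mset (\<lambda>x. \<not> 1 < cmod x) P = filter_mset (\<lambda>x. 1 < cmod (inverse x)) P"
    using P0 by (intro filter_mset_cong) (auto simp: norm_inverse one_less_inverse_iff neq_iff)
  also have "\<dots> = image_mset inverse B"
    by (subst (1) P_inverse[symmetric]) (simp add: B_def filter_mset_image_mset)
  finally have split: "P = B + image_mset inverse B"
    unfolding B_def by (metis multiset_partition)
  show thesis
  proof
    show "degree R = 2 * size B"
      using arg_cong[OF split, of size] unfolding P_def size_proots_complex by simp
    show "\<forall>x\<in>#B. 1 < cmod x \<and> poly R x = 0" unfolding B_def P_def using assms(2) by auto
    have "R = smult (lead_coeff R) (\<Prod>x\<in>#P. [:-x, 1:])"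
      unfolding P_def by (simp add: complex_poly_decompose_multiset)
    also have "(\<Prod>x\<in>#P. [:-x, 1:]) = (\<Prod>x\<in>#B. [:-x, 1:]) * (\<Prod>x\<in>#B. [:-inverse x, 1:])"
      by (subst split) (simp add: image_mset.compositionality o_def)
    also have "\<dots> = (\<Prod>x\<in>#B. recip_pair x)"
      unfolding recip_pair_def by (rule prod_mset.distrib[symmetric])
    finally show "R = smult (lead_coeff R) (\<Prod>x\<in>#B. recip_pair x)" .
  qed
qed

lemma nonzero_if_Gcd_eq_1:
  fixes p :: "int ^ 'd"
  assumes "Gcd (range (\<lambda>k. p $ k)) = 1"
  shows "p \<noteq> 0"
  using assms by (auto simp: image_constant_conv)

lemma Rpoly_factorization:
  fixes p :: "int ^ 'd"
  assumes gcd: "Gcd (range (\<lambda>k. p $ k)) = 1" and bound: "\<forall>k. \<bar>p $ k\<bar> \<le> int n" and "n \<ge> 1"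
    and m: "m = card {k. \<bar>p $ k\<bar> = int n}" "m > 0"
  obtains B where "size B = n - 1" and "\<forall>x\<in>#B. 1 < cmod x \<and> poly (Rpoly p n) x = 0"
    and "Rpoly p n = smult (of_nat m) (\<Prod>x\<in>#B. recip_pair x)"
proof -
  define R where "R = Rpoly p n"
  define X1 where "X1 = ([:-1, 1:] :: complex poly)"
  have PR: "Ppoly p n = X1\<^sup>2 * R" unfolding R_def X1_def by (rule Ppoly_eq_Rpoly[OF bound])
  note P = Ppoly_degree_lead_reflect[OF bound \<open>n \<ge> 1\<close> m]
  have "reflect_poly X1 = - X1" unfolding X1_def by (simp add: reflect_poly_pCons)
  hence "reflect_poly (X1\<^sup>2) = X1\<^sup>2" unfolding reflect_poly_power by simp
  moreover have "X1\<^sup>2 \<noteq> 0" "degree (X1\<^sup>2) = 2" "lead_coeff (X1\<^sup>2) = 1"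
    unfolding lead_coeff_power by (simp_all add: X1_def degree_power_eq)
  ultimately have X1: "reflect_poly (X1\<^sup>2) = X1\<^sup>2" "X1\<^sup>2 \<noteq> 0" "degree (X1\<^sup>2) = 2" "lead_coeff (X1\<^sup>2) = 1"
    by blast+
  obtain i where "p $ i \<noteq> 0" using nonzero_if_Gcd_eq_1[OF gcd] by (auto simp: vec_eq_iff)
  hence "(\<Sum>k\<in>UNIV. (p $ k)\<^sup>2) > 0" by (intro sum_pos2[of _ i]) auto
  hence R1: "poly R 1 \<noteq> 0" unfolding R_def poly_Rpoly_1 by (metis of_int_eq_0_iff less_irrefl)
  hence "R \<noteq> 0" by auto
  have "degree R = 2 * n - 2"
    using P(1) X1(2,3) \<open>R \<noteq> 0\<close> unfolding PR by (simp add: degree_mult_eq)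
  moreover have "lead_coeff R = of_nat m"
    using P(2) X1(4) unfolding PR by (simp add: lead_coeff_mult)
  moreover have "reflect_poly R = R"
    using P(3) X1 unfolding PR reflect_poly_mult by simp
  moreover have "poly R z \<noteq> 0" if "cmod z = 1" for z
  proof
    assume "poly R z = 0"
    moreover have "z \<noteq> 0" using that by auto
    ultimately have "Qpoly p z = 0"
      using Qpoly_eq_Ppoly[OF bound, of z] unfolding PR by simp
    hence "z = 1" using Qpoly_root_on_unit_circle[OF gcd that] by simp
    thus False using R1 \<open>poly R z = 0\<close> by simp
  qed
  ultimately obtain B where B: "degree R = 2 * size B" "\<forall>x\<in>#B. 1 < cmod x \<and> poly R x = 0"
      "R = smult (of_nat m) (\<Prod>x\<in>#B. recip_pair x)"
    using self_reciprocal_poly_factorization[of R] \<open>R \<noteq> 0\<close> by metis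
  moreover have "size B = n - 1" using B(1) \<open>degree R = 2 * n - 2\<close> by simp
  ultimately show thesis using that unfolding R_def by blast
qed

lemma poly_eqI_nonzero:
  fixes a b :: "'a::{idom, ring_char_0} poly"
  assumes "\<And>z. z \<noteq> 0 \<Longrightarrow> poly a z = poly b z"
  shows "a = b"
proof (rule ccontr)
  assume "a \<noteq> b"
  hence "finite {z. poly (a - b) z = 0}" by (intro poly_roots_finite) simp
  moreover have "UNIV - {0} \<subseteq> {z. poly (a - b) z = 0}" using assms by auto
  ultimately show False using infinite_UNIV_char_0 finite_subset by fastforce
qed

text \<open>The root \<lambda>_1 = 1 accounts for the factor (X - 1)^2 of P.\<close>

lemma Qpoly_factorization_iff_Rpoly:
  fixes p :: "int ^ 'd" and lam :: "nat \<Rightarrow> complex"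
  assumes bound: "\<forall>k. \<bar>p $ k\<bar> \<le> int n" and "n \<ge> 1" and "lam 1 = 1"
  shows "(\<forall>z. z \<noteq> 0 \<longrightarrow> Qpoly p z
            = c * z powi (- int n) * (\<Prod>k\<in>{1..n}. (z - lam k) * (z - inverse (lam k))))
    \<longleftrightarrow> Rpoly p n = smult c (\<Prod>k\<in>{2..n}. recip_pair (lam k))"
    (is "?Q \<longleftrightarrow> Rpoly p n = ?S")
proof -
  have "{1..n} = insert 1 {2..n}" using \<open>n \<ge> 1\<close> by auto
  hence "(\<Prod>k\<in>{1..n}. (z - lam k) * (z - inverse (lam k)))
      = (z - 1)\<^sup>2 * poly (\<Prod>k\<in>{2..n}. recip_pair (lam k)) z" for z
    using \<open>lam 1 = 1\<close> by (simp add: poly_prod poly_recip_pair power2_eq_square)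
  hence "Qpoly p z = c * z powi (- int n) * (\<Prod>k\<in>{1..n}. (z - lam k) * (z - inverse (lam k)))
      \<longleftrightarrow> poly (Ppoly p n) z = poly ([:-1, 1:]\<^sup>2 * ?S) z" if "z \<noteq> 0" for z
    using that by (simp add: Qpoly_eq_Ppoly[OF bound] algebra_simps)
  hence "?Q \<longleftrightarrow> (\<forall>z. z \<noteq> 0 \<longrightarrow> poly (Ppoly p n) z = poly ([:-1, 1:]\<^sup>2 * ?S) z)"
    by simp
  also have "\<dots> \<longleftrightarrow> Ppoly p n = [:-1, 1:]\<^sup>2 * ?S"
    by (metis poly_eqI_nonzero)
  also have "\<dots> \<longleftrightarrow> Rpoly p n = ?S"
    unfolding Ppoly_eq_Rpoly[OF bound] by (intro mult_left_cancel) simp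
  finally show ?thesis .
qed

lemma obtain_sorted_enumeration:
  fixes B :: "'a multiset" and f :: "'a \<Rightarrow> 'b::linorder"
  obtains e :: "nat \<Rightarrow> 'a" where "B = image_mset e (mset_set {a..<a + size B})"
    and "\<And>k. a \<le> k \<Longrightarrow> Suc k < a + size B \<Longrightarrow> f (e k) \<le> f (e (Suc k))"
proof -
  obtain xs where "mset xs = B" using ex_mset by blast
  define ys where "ys = sort_key f xs"
  have ys: "mset ys = B" "length ys = size B" "sorted (map f ys)"
    unfolding ys_def using \<open>mset xs = B\<close> by (auto simp flip: size_mset)
  define e where "e k = ys ! (k - a)" for k
  have "map e [a..<a + size B] = ys"
    unfolding e_def using ys(2) by (simp add: list_eq_iff_nth_eq)
  hence "B = image_mset e (mset_set {a..<a + size B})"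
    using ys(1) by (metis mset_map mset_upt)
  moreover have "f (e k) \<le> f (e (Suc k))" if "a \<le> k" "Suc k < a + size B" for k
    using sorted_nth_mono[OF ys(3), of "k - a" "Suc k - a"] that ys(2) unfolding e_def by auto
  ultimately show thesis by (rule that)
qed

lemma Qpoly_factorization_exists:
  fixes p :: "int ^ 'd"
  assumes gcd: "Gcd (range (\<lambda>k. p $ k)) = 1" and bound: "\<forall>k. \<bar>p $ k\<bar> \<le> int n" and "n \<ge> 1"
    and m: "m = card {k. \<bar>p $ k\<bar> = int n}" "m > 0"
  obtains lam :: "nat \<Rightarrow> complex" where
    "\<forall>z. z \<noteq> 0 \<longrightarrow> Qpoly p z
       = of_nat m * z powi (- int n) * (\<Prod>k\<in>{1..n}. (z - lam k) * (z - inverse (lam k)))"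
    and "lam 1 = 1" and "\<forall>k\<in>{2..n}. 1 < cmod (lam k)"
    and "\<forall>k. 2 \<le> k \<and> k < n \<longrightarrow> cmod (lam k) \<le> cmod (lam (Suc k))"
    and "\<forall>k\<in>{2..n}. lam k \<notin> complex_of_real ` {1..}"
proof -
  obtain B where size_B: "size B = n - 1" and B: "\<forall>x\<in>#B. 1 < cmod x \<and> poly (Rpoly p n) x = 0"
    and R: "Rpoly p n = smult (of_nat m) (\<Prod>x\<in>#B. recip_pair x)"
    using Rpoly_factorization[OF gcd bound \<open>n \<ge> 1\<close> m] by blast
  obtain e where e: "B = image_mset e (mset_set {2..<2 + size B})"
    and sorted: "\<And>k. 2 \<le> k \<Longrightarrow> Suc k < 2 + size B \<Longrightarrow> cmod (e k) \<le> cmod (e (Suc k))"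
    using obtain_sorted_enumeration[where B = B and a = 2 and f = cmod] by blast
  have "{2..<2 + size B} = {2..n}" using size_B \<open>n \<ge> 1\<close> by auto
  hence e: "B = image_mset e (mset_set {2..n})" using e by simp
  define lam where "lam = e(1 := 1)"
  have lam_B: "lam k \<in># B" if "k \<in> {2..n}" for k
    using that unfolding e lam_def by auto
  show thesis
  proof (rule that)
    have "(\<Prod>x\<in>#B. recip_pair x) = (\<Prod>k\<in>{2..n}. recip_pair (lam k))"
      unfolding e lam_def by (simp add: image_mset.compositionality o_def prod_unfold_prod_mset)
    thus "\<forall>z. z \<noteq> 0 \<longrightarrow> Qpoly p z
       = of_nat m * z powi (- int n) * (\<Prod>k\<in>{1..n}. (z - lam k) * (z - inverse (lam k)))"
      using R Qpoly_factorization_iff_Rpoly[OF bound \<open>n \<ge> 1\<close>] unfolding lam_def by simp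
    show "\<forall>k\<in>{2..n}. 1 < cmod (lam k)" using lam_B B by blast
    show "\<forall>k. 2 \<le> k \<and> k < n \<longrightarrow> cmod (lam k) \<le> cmod (lam (Suc k))"
      using sorted size_B unfolding lam_def by auto
    show "\<forall>k\<in>{2..n}. lam k \<notin> complex_of_real ` {1..}"
      using lam_B B poly_Rpoly_of_real_pos[OF nonzero_if_Gcd_eq_1[OF gcd]] by fastforce
  qed (simp add: lam_def)
qed

section \<open>The one-dimensional solution\<close>

definition geom_fps :: "complex \<Rightarrow> complex fps" where
  "geom_fps c = Abs_fps (\<lambda>j. c ^ j)"

lemma geom_fps_inverse: "(1 - fps_const c * fps_X) * geom_fps c = 1"
proof (rule fps_ext)
  fix j
  have "(1 - fps_const c * fps_X) * geom_fps c = geom_fps c - fps_const c * (fps_X * geom_fps c)"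
    by (simp add: algebra_simps)
  thus "fps_nth ((1 - fps_const c * fps_X) * geom_fps c) j = fps_nth 1 j"
    by (cases j) (simp_all add: geom_fps_def fps_X_mult_nth)
qed

lemma fps_conv_radius_geom_fps:
  assumes "r > 0" and "r * cmod c < 1"
  shows "ereal r \<le> fps_conv_radius (geom_fps c)"
proof -
  have "summable (\<lambda>j. (c * of_real r) ^ j)"
    using assms by (intro summable_geometric) (simp add: norm_mult mult.commute)
  hence "summable (\<lambda>j. fps_nth (geom_fps c) j * of_real r ^ j)"
    by (simp add: geom_fps_def power_mult_distrib)
  thus ?thesis using assms(1) unfolding fps_conv_radius_def by (auto dest: conv_radius_geI)
qed

lemma fps_conv_radius_prod:
  assumes "\<And>k. k \<in> K \<Longrightarrow> ereal r \<le> fps_conv_radius (f k :: complex fps)"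
  shows "ereal r \<le> fps_conv_radius (\<Prod>k\<in>K. f k)"
  using assms
proof (induction K rule: infinite_finite_induct)
  case (insert k K)
  have "ereal r \<le> min (fps_conv_radius (f k)) (fps_conv_radius (\<Prod>k\<in>K. f k))"
    using insert by simp
  also have "\<dots> \<le> fps_conv_radius (f k * (\<Prod>k\<in>K. f k))" by (rule fps_conv_radius_mult)
  finally show ?case using insert by simp
qed simp_all

lemma fps_conv_radius_prod_geom_fps:
  assumes "finite K" and "\<And>k. k \<in> K \<Longrightarrow> cmod (mu k) < 1"
  shows "ereal 1 < fps_conv_radius (\<Prod>k\<in>K. geom_fps (mu k))"
proof -
  define \<rho> where "\<rho> = Max (insert 0 ((\<lambda>k. cmod (mu k)) ` K))"
  have \<rho>: "0 \<le> \<rho>" "\<rho> < 1" "\<And>k. k \<in> K \<Longrightarrow> cmod (mu k) \<le> \<rho>"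
    using assms Max_in[of "insert 0 ((\<lambda>k. cmod (mu k)) ` K)"] unfolding \<rho>_def by auto
  define r where "r = 2 / (1 + \<rho>)"
  have "r > 1" unfolding r_def using \<rho> by (simp add: field_simps)
  have "r * cmod (mu k) < 1" if "k \<in> K" for k
  proof -
    have "r * cmod (mu k) \<le> r * \<rho>" using \<rho>(3)[OF that] \<open>r > 1\<close> by simp
    also have "\<dots> < 1" unfolding r_def using \<rho> by (simp add: field_simps)
    finally show ?thesis .
  qed
  hence "ereal r \<le> fps_conv_radius (\<Prod>k\<in>K. geom_fps (mu k))"
    using \<open>r > 1\<close> by (intro fps_conv_radius_prod fps_conv_radius_geom_fps) auto
  moreover have "ereal 1 < ereal r" using \<open>r > 1\<close> by simp
  ultimately show ?thesis using order_less_le_trans by blast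
qed

lemma eval_fps_prod_geom_fps_1:
  assumes "finite K" and "\<And>k. k \<in> K \<Longrightarrow> cmod (mu k) < 1"
  shows "eval_fps (\<Prod>k\<in>K. geom_fps (mu k)) 1 * (\<Prod>k\<in>K. 1 - mu k) = 1"
proof -
  define G where "G = (\<Prod>k\<in>K. geom_fps (mu k))"
  define L where "L = (\<Prod>k\<in>K. [:1, - mu k:])"
  have "fps_of_poly L = (\<Prod>k\<in>K. 1 - fps_const (mu k) * fps_X)"
    unfolding L_def fps_of_poly_prod by (simp add: fps_of_poly_linear' flip: fps_const_neg)
  hence "fps_of_poly L * G = 1"
    unfolding G_def by (simp add: geom_fps_inverse flip: prod.distrib)
  moreover have "eval_fps (fps_of_poly L * G) 1 = eval_fps G 1 * eval_fps (fps_of_poly L) 1"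
    using fps_conv_radius_prod_geom_fps[OF assms] unfolding G_def by (subst eval_fps_mult) auto
  ultimately show ?thesis unfolding G_def L_def by (simp add: poly_prod)
qed

lemma summable_moment_fps:
  fixes f :: "complex fps"
  assumes "ereal 1 < fps_conv_radius f"
  shows "summable (\<lambda>j. of_nat j * cmod (fps_nth f j))"
proof -
  have "ereal (norm (1::complex)) < fps_conv_radius (fps_deriv f)"
    using assms fps_conv_radius_deriv[of f] by (simp add: order_less_le_trans)
  from norm_summable_fps[OF this]
  have "summable (\<lambda>j. of_nat (Suc j) * cmod (fps_nth f (Suc j)))"
    by (simp add: fps_deriv_nth norm_mult del: of_nat_Suc)
  thus ?thesis by (subst summable_Suc_iff[symmetric]) simp
qed

lemma norm_partial_moment_le:
  fixes h :: "nat \<Rightarrow> complex"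
  assumes s1: "summable (\<lambda>j. cmod (h j))" and s2: "summable (\<lambda>j. of_nat j * cmod (h j))"
    and "h sums S"
  shows "cmod ((\<Sum>j<t. of_nat (t - j) * h j) - of_nat t * S) \<le> (\<Sum>j. of_nat j * cmod (h j))"
proof -
  define a where "a j = of_nat j * cmod (h j)" for j
  have S: "S = (\<Sum>j. h (j + t)) + (\<Sum>j<t. h j)"
    using suminf_split_initial_segment[of h t] assms(3) by (simp add: sums_iff)
  have st: "summable (\<lambda>j. cmod (h (j + t)))" using s1 by (rule summable_ignore_initial_segment)
  have "(\<Sum>j<t. of_nat (t - j) * h j) = (\<Sum>j<t. of_nat t * h j - of_nat j * h j)"
    by (intro sum.cong) (simp_all add: of_nat_diff algebra_simps)
  hence "(\<Sum>j<t. of_nat (t - j) * h j) - of_nat t * S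
      = - (\<Sum>j<t. of_nat j * h j) - of_nat t * (\<Sum>j. h (j + t))"
    unfolding S by (simp add: sum_subtractf sum_distrib_left algebra_simps)
  hence "cmod ((\<Sum>j<t. of_nat (t - j) * h j) - of_nat t * S)
      \<le> cmod (\<Sum>j<t. of_nat j * h j) + cmod (of_nat t * (\<Sum>j. h (j + t)))"
    by (metis norm_minus_cancel norm_triangle_ineq4)
  also have "cmod (\<Sum>j<t. of_nat j * h j) \<le> (\<Sum>j<t. a j)"
    unfolding a_def by (rule order_trans[OF norm_sum]) (simp add: norm_mult)
  also have "cmod (of_nat t * (\<Sum>j. h (j + t))) \<le> of_nat t * (\<Sum>j. cmod (h (j + t)))"
    using summable_norm[OF st] by (simp add: norm_mult mult_left_mono)
  also have "\<dots> = (\<Sum>j. of_nat t * cmod (h (j + t)))"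
    using st by (simp add: suminf_mult)
  also have "\<dots> \<le> (\<Sum>j. a (j + t))"
    using st summable_ignore_initial_segment[OF s2] unfolding a_def
    by (intro suminf_le summable_mult) (auto intro!: mult_right_mono)
  also have "(\<Sum>j<t. a j) + (\<Sum>j. a (j + t)) = (\<Sum>j. a j)"
    using suminf_split_initial_segment[OF s2[folded a_def], of t] by simp
  finally show ?thesis unfolding a_def by simp
qed

abbreviation ramp_fps :: "complex fps" where
  "ramp_fps \<equiv> Abs_fps (\<lambda>j. of_nat (Suc j))"

lemma ramp_fps_inverse: "(1 - fps_X)\<^sup>2 * ramp_fps = 1"
proof -
  have "(1 - fps_X) * ramp_fps = geom_fps 1"
  proof (rule fps_ext)
    fix j
    show "fps_nth ((1 - fps_X) * ramp_fps) j = fps_nth (geom_fps 1) j"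
      by (cases j) (simp_all add: geom_fps_def algebra_simps fps_X_mult_nth)
  qed
  hence "(1 - fps_X)\<^sup>2 * ramp_fps = (1 - fps_const 1 * fps_X) * geom_fps 1"
    by (simp add: power2_eq_square mult.assoc)
  thus ?thesis by (simp only: geom_fps_inverse)
qed

text \<open>Since h(1) c = 1, the coefficients c \<Sum>_{j<t} (t - j) h_j of X c h / (1 - X)^2 differ from t
  by at most |c| \<Sum> j |h_j|.\<close>

lemma fps_nth_ramp_mult_near_identity:
  fixes h :: "complex fps"
  assumes "ereal 1 < fps_conv_radius h" and "eval_fps h 1 * c = 1"
  shows "\<exists>C. \<forall>t. cmod (fps_nth (fps_X * (fps_const c * (ramp_fps * h))) t - of_nat t) \<le> C"
proof -
  have "ereal (norm (1::complex)) < fps_conv_radius h" using assms(1) by simp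
  hence h: "summable (\<lambda>j. cmod (fps_nth h j))" "summable (\<lambda>j. of_nat j * cmod (fps_nth h j))"
    "(\<lambda>j. fps_nth h j) sums eval_fps h 1"
    using norm_summable_fps sums_eval_fps summable_moment_fps[OF assms(1)] by fastforce+
  have nth: "fps_nth (fps_X * (fps_const c * (ramp_fps * h))) t = c * (\<Sum>j<t. of_nat (t - j) * fps_nth h j)" for t
  proof (cases t)
    case (Suc i)
    have "fps_nth (fps_X * (fps_const c * (ramp_fps * h))) t = c * (\<Sum>l=0..i. of_nat (Suc l) * fps_nth h (i - l))"
      unfolding Suc fps_X_mult_nth fps_mult_left_const_nth by (simp add: fps_mult_nth)
    also have "(\<Sum>l=0..i. of_nat (Suc l) * fps_nth h (i - l)) = (\<Sum>j<t. of_nat (t - j) * fps_nth h j)"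
      unfolding Suc
      by (subst sum.nat_diff_reindex[symmetric]) (auto simp: atLeast0AtMost lessThan_Suc_atMost intro: sum.cong)
    finally show ?thesis .
  qed simp
  have "cmod (fps_nth (fps_X * (fps_const c * (ramp_fps * h))) t - of_nat t)
      \<le> cmod c * (\<Sum>j. of_nat j * cmod (fps_nth h j))" for t
  proof -
    have "fps_nth (fps_X * (fps_const c * (ramp_fps * h))) t - of_nat t
        = c * ((\<Sum>j<t. of_nat (t - j) * fps_nth h j) - of_nat t * eval_fps h 1)"
      using assms(2) unfolding nth by (simp add: algebra_simps)
    thus ?thesis using norm_partial_moment_le[OF h, of t]
      by (simp add: norm_mult mult_left_mono)
  qed
  thus ?thesis by blast
qed

lemma fps_const_prod: "(\<Prod>k\<in>K. fps_const (f k)) = fps_const (\<Prod>k\<in>K. f k)"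
  by (induction K rule: infinite_finite_induct) simp_all

lemma fps_of_poly_linear_factor:
  fixes x :: complex
  assumes "x \<noteq> 0"
  shows "fps_of_poly [:-x, 1:] = fps_const (- x) * (1 - fps_const (inverse x) * fps_X)"
proof -
  have "- x * inverse x = - 1" using assms by (simp add: field_simps)
  hence "fps_const (- x) * fps_const (inverse x) = - 1" by simp
  hence "fps_const (- x) * (1 - fps_const (inverse x) * fps_X) = fps_const (- x) + fps_X"
    by (simp add: right_diff_distrib flip: mult.assoc)
  thus ?thesis by (simp add: fps_of_poly_linear fps_const_neg add.commute)
qed

lemma fps_halfline_solution:
  fixes lam :: "nat \<Rightarrow> complex"
  assumes "finite K" and big: "\<And>k. k \<in> K \<Longrightarrow> 1 < cmod (lam k)"
  obtains F where "fps_nth F 0 = 0" and "\<exists>C. \<forall>t. cmod (fps_nth F t - of_nat t) \<le> C"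
    and "fps_of_poly ([:-1, 1:]\<^sup>2 * (\<Prod>k\<in>K. recip_pair (lam k))) * F
       = fps_const (\<Prod>k\<in>K. 1 - lam k) * fps_X * fps_of_poly (\<Prod>k\<in>K. [:-inverse (lam k), 1:])"
proof -
  define mu where "mu k = inverse (lam k)" for k
  have lam0: "lam k \<noteq> 0" if "k \<in> K" for k using big[OF that] by auto
  have mu: "cmod (mu k) < 1" if "k \<in> K" for k
    using big[OF that] unfolding mu_def by (simp add: norm_inverse inverse_less_1_iff)
  define h where "h = (\<Prod>k\<in>K. geom_fps (mu k))"
  define c where "c = (\<Prod>k\<in>K. 1 - mu k)"
  define A where "A = (\<Prod>k\<in>K. [:-inverse (lam k), 1:])"
  define F where "F = fps_X * (fps_const c * (ramp_fps * h))"
  have "fps_of_poly (\<Prod>k\<in>K. [:-lam k, 1:])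
      = fps_const (\<Prod>k\<in>K. - lam k) * (\<Prod>k\<in>K. 1 - fps_const (mu k) * fps_X)"
    unfolding fps_of_poly_prod mu_def fps_const_prod[symmetric] prod.distrib[symmetric]
    by (intro prod.cong) (simp_all add: fps_of_poly_linear_factor lam0)
  moreover have "fps_of_poly ([:-1, 1:]\<^sup>2) = (1 - fps_X :: complex fps)\<^sup>2"
    by (simp add: fps_of_poly_power fps_of_poly_linear power2_commute)
  ultimately have "fps_of_poly ([:-1, 1:]\<^sup>2 * (\<Prod>k\<in>K. recip_pair (lam k)))
      = (1 - fps_X)\<^sup>2 * (fps_const (\<Prod>k\<in>K. - lam k) * (\<Prod>k\<in>K. 1 - fps_const (mu k) * fps_X)) * fps_of_poly A"
    unfolding recip_pair_def prod.distrib fps_of_poly_mult A_def by (simp only: mult.assoc)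
  hence "fps_of_poly ([:-1, 1:]\<^sup>2 * (\<Prod>k\<in>K. recip_pair (lam k))) * F
      = ((1 - fps_X)\<^sup>2 * ramp_fps) * ((\<Prod>k\<in>K. 1 - fps_const (mu k) * fps_X) * h)
        * (fps_const ((\<Prod>k\<in>K. - lam k) * c) * fps_X * fps_of_poly A)"
    unfolding F_def by (simp only: fps_const_mult[symmetric] mult_ac)
  also have "(\<Prod>k\<in>K. 1 - fps_const (mu k) * fps_X) * h = 1"
    unfolding h_def by (simp add: geom_fps_inverse flip: prod.distrib)
  also have "(\<Prod>k\<in>K. - lam k) * c = (\<Prod>k\<in>K. 1 - lam k)"
    unfolding c_def prod.distrib[symmetric] by (intro prod.cong) (simp_all add: mu_def lam0 algebra_simps)
  finally have "fps_of_poly ([:-1, 1:]\<^sup>2 * (\<Prod>k\<in>K. recip_pair (lam k))) * F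
      = fps_const (\<Prod>k\<in>K. 1 - lam k) * fps_X * fps_of_poly A"
    unfolding ramp_fps_inverse by simp
  moreover have "\<exists>C. \<forall>t. cmod (fps_nth F t - of_nat t) \<le> C"
    unfolding F_def h_def c_def using fps_conv_radius_prod_geom_fps eval_fps_prod_geom_fps_1 \<open>finite K\<close> mu
    by (intro fps_nth_ramp_mult_near_identity) auto
  moreover have "fps_nth F 0 = 0" unfolding F_def by simp
  ultimately show thesis using that unfolding A_def by blast
qed

definition fps_coeff_int :: "complex fps \<Rightarrow> int \<Rightarrow> complex" where
  "fps_coeff_int F t = (if t < 0 then 0 else fps_nth F (nat t))"

lemma fps_nth_monom_mult:
  assumes "t \<ge> 0"
  shows "fps_nth (fps_of_poly (monom c j) * F) (nat (t + int n)) = c * fps_coeff_int F (t + int n - int j)"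
proof -
  have "fps_nth (fps_of_poly (monom c j) * F) (nat (t + int n)) = c * fps_nth (fps_X ^ j * F) (nat (t + int n))"
    by (simp add: fps_of_poly_monom mult.assoc)
  also have "fps_nth (fps_X ^ j * F) (nat (t + int n)) = fps_coeff_int F (t + int n - int j)"
    unfolding fps_X_power_mult_nth fps_coeff_int_def using assms by (auto simp: nat_diff_distrib)
  finally show ?thesis .
qed

lemma fps_nth_Ppoly_mult:
  fixes p :: "int ^ 'd"
  assumes bound: "\<forall>k. \<bar>p $ k\<bar> \<le> int n" and "t \<ge> 0"
  shows "fps_nth (fps_of_poly (Ppoly p n) * F) (nat (t + int n)) = dlap1 p (fps_coeff_int F) t"
proof -
  have "fps_nth (fps_of_poly (Ppoly p n) * F) (nat (t + int n))
     = (\<Sum>k\<in>UNIV. fps_nth (fps_of_poly (monom 1 (n + nat \<bar>p $ k\<bar>)) * F) (nat (t + int n))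
        + fps_nth (fps_of_poly (monom 1 (n - nat \<bar>p $ k\<bar>)) * F) (nat (t + int n))
        - fps_nth (fps_of_poly (monom 2 n) * F) (nat (t + int n)))"
    unfolding Ppoly_def fps_of_poly_sum sum_distrib_right fps_sum_nth
    by (simp add: fps_of_poly_add fps_of_poly_diff algebra_simps)
  also have "\<dots> = dlap1 p (fps_coeff_int F) t"
    unfolding dlap1_def fps_nth_monom_mult[OF \<open>t \<ge> 0\<close>]
  proof (intro sum.cong refl)
    fix k
    have "int (n - nat \<bar>p $ k\<bar>) = int n - \<bar>p $ k\<bar>" using bound[rule_format, of k] by simp
    thus "1 * fps_coeff_int F (t + int n - int (n + nat \<bar>p $ k\<bar>))
        + 1 * fps_coeff_int F (t + int n - int (n - nat \<bar>p $ k\<bar>)) - 2 * fps_coeff_int F (t + int n - int n)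
      = fps_coeff_int F (t + p $ k) + fps_coeff_int F (t - p $ k) - 2 * fps_coeff_int F t"
      by (cases "p $ k \<ge> 0") simp_all
  qed
  finally show ?thesis .
qed

lemma dlap1_fps_coeff_int:
  fixes p :: "int ^ 'd"
  assumes bound: "\<forall>k. \<bar>p $ k\<bar> \<le> int n" and "n \<ge> 1"
    and F: "fps_of_poly (Ppoly p n) * F = fps_const H * fps_X * fps_of_poly A"
    and "degree A = n - 1" and "lead_coeff A = 1" and "t \<ge> 0"
  shows "dlap1 p (fps_coeff_int F) t = (if t = 0 then H else 0)"
proof -
  have "dlap1 p (fps_coeff_int F) t = H * coeff A (nat (t + int n) - 1)"
    using fps_nth_Ppoly_mult[OF bound \<open>t \<ge> 0\<close>, of F] \<open>t \<ge> 0\<close> \<open>n \<ge> 1\<close>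
    unfolding F by (simp add: fps_X_mult_nth mult.assoc)
  also have "coeff A (nat (t + int n) - 1) = (if t = 0 then 1 else 0)"
    using assms(4-6) \<open>n \<ge> 1\<close> by (auto simp: coeff_eq_0)
  finally show ?thesis by simp
qed

text \<open>The imaginary part is a bounded solution, hence zero.\<close>

lemma halfline_solution_Re:
  fixes p :: "int ^ 'd" and g :: "int \<Rightarrow> complex"
  assumes "p \<noteq> 0" and zero: "\<And>t. t \<le> 0 \<Longrightarrow> g t = 0"
    and near: "\<And>t. t > 0 \<Longrightarrow> cmod (g t - of_int t) \<le> C"
    and harmonic: "\<And>t. t > 0 \<Longrightarrow> dlap1 p g t = 0"
  shows "Im (g s) = 0" and "halfline_solution p (\<lambda>t. Re (g t))"
proof -
  have "0 \<le> C" using near[of 1] by (meson norm_ge_zero order_trans zero_less_one)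
  have Im_bound: "\<bar>Im (g t)\<bar> \<le> C" for t
  proof (cases "t > 0")
    case True thus ?thesis using near[OF True] abs_Im_le_cmod[of "g t - of_int t"] by simp
  next
    case False thus ?thesis using zero \<open>0 \<le> C\<close> by simp
  qed
  show "Im (g s) = 0"
  proof (rule halfline_bounded_harmonic_eq_0[OF \<open>p \<noteq> 0\<close> Im_bound])
    show "Im (g t) = 0" if "t \<le> 0" for t using zero[OF that] by simp
    show "dlap1 p (\<lambda>t. Im (g t)) t = 0" if "t > 0" for t
      using harmonic[OF that] unfolding Im_dlap1[symmetric] by simp
  qed
  show "halfline_solution p (\<lambda>t. Re (g t))"
    unfolding halfline_solution_def
  proof (intro conjI allI impI exI)
    fix t :: int
    assume "t > 0"
    thus "dlap1 p (\<lambda>t. Re (g t)) t = 0" using harmonic[of t] by (simp flip: Re_dlap1)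
    show "\<bar>Re (g t) - of_int t\<bar> \<le> C"
      using near[OF \<open>t > 0\<close>] abs_Re_le_cmod[of "g t - of_int t"] by simp
  next
    fix t :: int
    assume "t \<le> 0"
    thus "Re (g t) = 0" using zero by simp
  qed
qed

lemma halfline_solution_exists:
  fixes p :: "int ^ 'd" and lam :: "nat \<Rightarrow> complex"
  assumes "p \<noteq> 0" and bound: "\<forall>k. \<bar>p $ k\<bar> \<le> int n" and "n \<ge> 1"
    and R: "Rpoly p n = smult c (\<Prod>k\<in>{2..n}. recip_pair (lam k))"
    and big: "\<forall>k\<in>{2..n}. 1 < cmod (lam k)"
  obtains f where "halfline_solution p f"
    and "complex_of_real (dlap1 p f 0) = c * (\<Prod>k\<in>{2..n}. 1 - lam k)"
proof -
  define H where "H = c * (\<Prod>k\<in>{2..n}. 1 - lam k)"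
  define A where "A = (\<Prod>k\<in>{2..n}. [:-inverse (lam k), 1:])"
  obtain F where F0: "fps_nth F 0 = 0" and "\<exists>C. \<forall>t. cmod (fps_nth F t - of_nat t) \<le> C"
    and F: "fps_of_poly ([:-1, 1:]\<^sup>2 * (\<Prod>k\<in>{2..n}. recip_pair (lam k))) * F
       = fps_const (\<Prod>k\<in>{2..n}. 1 - lam k) * fps_X * fps_of_poly A"
    using fps_halfline_solution[of "{2..n}" lam] big unfolding A_def by auto
  then obtain C where FC: "\<And>t. cmod (fps_nth F t - of_nat t) \<le> C" by blast
  have "fps_of_poly (Ppoly p n) * F
      = fps_const c * (fps_of_poly ([:-1, 1:]\<^sup>2 * (\<Prod>k\<in>{2..n}. recip_pair (lam k))) * F)"
    unfolding Ppoly_eq_Rpoly[OF bound] R mult_smult_right fps_of_poly_smult by (simp only: mult.assoc)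
  also have "\<dots> = fps_const H * fps_X * fps_of_poly A"
    unfolding F H_def by (simp only: mult.assoc fps_const_mult[symmetric])
  finally have "fps_of_poly (Ppoly p n) * F = fps_const H * fps_X * fps_of_poly A" .
  moreover have "degree A = n - 1" unfolding A_def by (subst degree_prod_eq_sum_degree) auto
  moreover have "lead_coeff A = 1" unfolding A_def by (simp add: lead_coeff_prod)
  ultimately have rec: "dlap1 p (fps_coeff_int F) t = (if t = 0 then H else 0)" if "t \<ge> 0" for t
    using dlap1_fps_coeff_int[OF bound \<open>n \<ge> 1\<close>] that by blast
  define g where "g = fps_coeff_int F"
  have "g t = 0" if "t \<le> 0" for t using that F0 unfolding g_def fps_coeff_int_def by auto
  moreover have "cmod (g t - of_int t) \<le> C" if "t > 0" for t
    using FC[of "nat t"] that unfolding g_def fps_coeff_int_def by simp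
  moreover have "dlap1 p g t = 0" if "t > 0" for t using rec[of t] that unfolding g_def by simp
  ultimately have g: "Im (g t) = 0" "halfline_solution p (\<lambda>t. Re (g t))" for t
    using halfline_solution_Re[OF \<open>p \<noteq> 0\<close>, of g C] by blast+
  show thesis
  proof (rule that[OF g(2)])
    have "dlap1 p g 0 = complex_of_real (dlap1 p (\<lambda>t. Re (g t)) 0)"
      using g(1) by (simp add: complex_eq_iff Re_dlap1 Im_dlap1 dlap1_def)
    thus "complex_of_real (dlap1 p (\<lambda>t. Re (g t)) 0) = c * (\<Prod>k\<in>{2..n}. 1 - lam k)"
      using rec[of 0] unfolding g_def H_def by simp
  qed
qed

section \<open>The formula for H(p)\<close>

lemma Hfun_sq_eq:
  fixes p :: "int ^ 'd" and lam :: "nat \<Rightarrow> complex"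
  assumes "p \<noteq> 0" and bound: "\<forall>k. \<bar>p $ k\<bar> \<le> int n" and "n \<ge> 1"
    and Q: "\<forall>z. z \<noteq> 0 \<longrightarrow> Qpoly p z
      = of_nat m * z powi (- int n) * (\<Prod>k\<in>{1..n}. (z - lam k) * (z - inverse (lam k)))"
    and "lam 1 = 1" and big: "\<forall>k\<in>{2..n}. 1 < cmod (lam k)"
  shows "complex_of_real ((Hfun p)\<^sup>2) = of_int (\<Sum>k\<in>UNIV. (p $ k)\<^sup>2) * of_nat m * (\<Prod>k\<in>{2..n}. - lam k)"
proof -
  have R: "Rpoly p n = smult (of_nat m) (\<Prod>k\<in>{2..n}. recip_pair (lam k))"
    using Q Qpoly_factorization_iff_Rpoly[where lam = lam, OF bound \<open>n \<ge> 1\<close> \<open>lam 1 = 1\<close>] by blast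
  obtain f where f: "halfline_solution p f"
    and H: "complex_of_real (dlap1 p f 0) = of_nat m * (\<Prod>k\<in>{2..n}. 1 - lam k)"
    using halfline_solution_exists[OF \<open>p \<noteq> 0\<close> bound \<open>n \<ge> 1\<close> R big] by blast
  have "complex_of_real ((Hfun p)\<^sup>2) = (of_nat m)\<^sup>2 * (\<Prod>k\<in>{2..n}. (1 - lam k)\<^sup>2)"
    using H unfolding Hfun_eq_dlap1[OF \<open>p \<noteq> 0\<close> f] by (simp add: power_mult_distrib prod_power_distrib)
  also have "(\<Prod>k\<in>{2..n}. (1 - lam k)\<^sup>2)
      = (\<Prod>k\<in>{2..n}. (1 - lam k) * (1 - inverse (lam k))) * (\<Prod>k\<in>{2..n}. - lam k)"
    unfolding prod.distrib[symmetric]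
  proof (intro prod.cong refl)
    fix k assume "k \<in> {2..n}"
    hence "lam k \<noteq> 0" using big by force
    thus "(1 - lam k)\<^sup>2 = (1 - lam k) * (1 - inverse (lam k)) * - lam k"
      by (simp add: power2_eq_square field_simps)
  qed
  also have "of_nat m * (\<Prod>k\<in>{2..n}. (1 - lam k) * (1 - inverse (lam k))) = of_int (\<Sum>k\<in>UNIV. (p $ k)\<^sup>2)"
    using poly_Rpoly_1[of p n] unfolding R by (simp add: poly_prod poly_recip_pair)
  ultimately show ?thesis by (simp add: power2_eq_square mult_ac)
qed

lemma max_abs_coeff_props:
  fixes p :: "int ^ 'd"
  assumes "p \<noteq> 0"
  defines "n \<equiv> nat (Max (range (\<lambda>k. \<bar>p $ k\<bar>)))"
  shows "\<forall>k. \<bar>p $ k\<bar> \<le> int n" and "n \<ge> 1" and "card {k. \<bar>p $ k\<bar> = int n} > 0"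
proof -
  obtain i where "p $ i \<noteq> 0" using assms(1) by (auto simp: vec_eq_iff)
  have "Max (range (\<lambda>k. \<bar>p $ k\<bar>)) \<in> range (\<lambda>k. \<bar>p $ k\<bar>)" by (rule Max_in) auto
  then obtain j where j: "\<bar>p $ j\<bar> = Max (range (\<lambda>k. \<bar>p $ k\<bar>))" by (metis imageE)
  have "\<bar>p $ k\<bar> \<le> \<bar>p $ j\<bar>" for k unfolding j by (rule Max_ge) auto
  moreover have "int n = \<bar>p $ j\<bar>" unfolding n_def j[symmetric] by simp
  ultimately show bound: "\<forall>k. \<bar>p $ k\<bar> \<le> int n" by auto
  show "n \<ge> 1" using bound[rule_format, of i] \<open>p $ i \<noteq> 0\<close> by linarith
  show "card {k. \<bar>p $ k\<bar> = int n} > 0" using \<open>int n = \<bar>p $ j\<bar>\<close> by (auto simp: card_gt_0_iff)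
qed

theorem mainTheorem7:
  fixes p :: "int ^ 'd"
  assumes "Gcd (range (\<lambda>k. p $ k)) = 1"
  defines "n \<equiv> nat (Max (range (\<lambda>k. \<bar>p $ k\<bar>)))"
  defines "m \<equiv> card {k. \<bar>p $ k\<bar> = int n}"
  defines "roots \<equiv> \<lambda>lam :: nat \<Rightarrow> complex.
      (\<forall>z. z \<noteq> 0 \<longrightarrow> Qpoly p z =
          of_nat m * z powi (- int n) * (\<Prod>k\<in>{1..n}. (z - lam k) * (z - inverse (lam k))))
    \<and> lam 1 = 1
    \<and> (\<forall>k\<in>{2..n}. 1 < cmod (lam k))
    \<and> (\<forall>k. 2 \<le> k \<and> k < n \<longrightarrow> cmod (lam k) \<le> cmod (lam (Suc k)))
    \<and> (\<forall>k\<in>{2..n}. lam k \<notin> complex_of_real ` {1..})"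
  shows "(\<exists>lam. roots lam) \<and>
         (\<forall>lam. roots lam \<longrightarrow>
            complex_of_real ((Hfun p)\<^sup>2) =
              of_int (\<Sum>k\<in>UNIV. (p $ k)\<^sup>2) * of_nat m * (\<Prod>k\<in>{2..n}. - lam k))"
proof -
  have "p \<noteq> 0" using nonzero_if_Gcd_eq_1[OF assms(1)] .
  note bound = max_abs_coeff_props[OF this, folded n_def]
  have "m > 0" unfolding m_def using bound(3) .
  show ?thesis
  proof (intro conjI allI impI)
    obtain lam where "\<forall>z. z \<noteq> 0 \<longrightarrow> Qpoly p z
          = of_nat m * z powi (- int n) * (\<Prod>k\<in>{1..n}. (z - lam k) * (z - inverse (lam k)))"
      and "lam 1 = 1" and "\<forall>k\<in>{2..n}. 1 < cmod (lam k)"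
      and "\<forall>k. 2 \<le> k \<and> k < n \<longrightarrow> cmod (lam k) \<le> cmod (lam (Suc k))"
      and "\<forall>k\<in>{2..n}. lam k \<notin> complex_of_real ` {1..}"
      by (rule Qpoly_factorization_exists[OF assms(1) bound(1,2) m_def[THEN meta_eq_to_obj_eq] \<open>m > 0\<close>])
    hence "roots lam" unfolding roots_def by (intro conjI)
    thus "\<exists>lam. roots lam" by blast
  next
    fix lam assume "roots lam"
    hence "\<forall>z. z \<noteq> 0 \<longrightarrow> Qpoly p z
          = of_nat m * z powi (- int n) * (\<Prod>k\<in>{1..n}. (z - lam k) * (z - inverse (lam k)))"
      and "lam 1 = 1" and "\<forall>k\<in>{2..n}. 1 < cmod (lam k)"
      unfolding roots_def by blast+
    thus "complex_of_real ((Hfun p)\<^sup>2) = of_int (\<Sum>k\<in>UNIV. (p $ k)\<^sup>2) * of_nat m * (\<Prod>k\<in>{2..n}. - lam k)"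
      by (rule Hfun_sq_eq[OF \<open>p \<noteq> 0\<close> bound(1,2)])
  qed
qed

end
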